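(* During or after the execution of $\mathit{find\_ap\_set}$, let $xy$ be an edge of $H$ both of whose endpoints are even. If both $x$ and $y$ have been completely scanned, then $x$ and $y$ belong to the same blossom.
   Context: Let $H$ be a finite undirected graph with a matching $M_H$ (free vertices, $\mathit{mate}$, alternating and augmenting paths as usual). The procedure $\mathit{find\_ap\_set}$ maintains a search structure $S$ (a forest of alternating trees whose nodes are odd vertices and blossoms = sets of even vertices with a base; $b(x)$ denotes the base of the blossom containing an even vertex $x$) and a set $\mathit{CP}$ of vertex-disjoint augmenting paths, both initially empty. For each free vertex $f$ in turn: if $f$ is not on a path of $\mathit{CP}$, add $f$ to $S$ as the root of a new tree (a trivial even blossom) and call $\mathit{find\_ap}(f)$. The recursive call $\mathit{find\_ap}(x)$, for $x$ even, scans each non-matching edge $xy$ in turn: if $y\notin S$ and $y$ is free, add $xy$ to $S$, add the path formed by the canonical path of $x$ followed by $y$ to $\mathit{CP}$, and terminate every currently executing call of $\mathit{find\_ap}$ (the outer loop then continues with the next free vertex); if $y\notin S$ and $y$ is matched (grow step), add $y$ as odd child of $b(x)$ and $y'=\mathit{mate}(y)$ as even child of $y$, and call $\mathit{find\_ap}(y')$; if $y\in S$ and $b(y)$ is even and a proper descendant of $b(x)$ in $S$ (blossom step), let $u_1,\dots,u_k$ be the odd vertices on the tree path from $b(x)$ to $b(y)$ with $u_1$ closest to $b(x)$, merge all blossoms and odd vertices on this path into one blossom with base $b(x)$ (so $u_1,\dots,u_k$ become even), and call $\mathit{find\_ap}(u_1),\dots,\mathit{find\_ap}(u_k)$ in this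 order; otherwise do nothing. Vertices in $S$ remain in $S$ between trees. An even vertex $x$ is completely scanned if $\mathit{find\_ap}(x)$ has been called and was not terminated prematurely (so all non-matching edges at $x$ have been scanned). *)

theory Defs
  imports Main
begin

definition graph :: "'v set \<Rightarrow> ('v \<times> 'v) set \<Rightarrow> bool" where
  "graph V E \<longleftrightarrow> finite V \<and> E \<subseteq> V \<times> V \<and> sym E \<and> irrefl E"

definition matching :: "('v \<times> 'v) set \<Rightarrow> ('v \<times> 'v) set \<Rightarrow> bool" where
  "matching E M \<longleftrightarrow> M \<subseteq> E \<and> sym M \<and> (\<forall>v u w. (v,u) \<in> M \<longrightarrow> (v,w) \<in> M \<longrightarrow> u = w)"

definition matched :: "('v \<times> 'v) set \<Rightarrow> 'v \<Rightarrow> bool" where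
  "matched M v \<longleftrightarrow> (\<exists>u. (v,u) \<in> M)"

definition free :: "'v set \<Rightarrow> ('v \<times> 'v) set \<Rightarrow> 'v \<Rightarrow> bool" where
  "free V M v \<longleftrightarrow> v \<in> V \<and> \<not> matched M v"

definition mate :: "('v \<times> 'v) set \<Rightarrow> 'v \<Rightarrow> 'v" where
  "mate M v = (THE u. (v,u) \<in> M)"

(*  ev    : even vertices of S (vertices lying in blossoms)                *)
(*  base  : base v = b(v), the base of the blossom containing even v       *)
(*  opar  : for an odd vertex u, the even vertex x whose edge xu added u;  *)
(*          the parent blossom of u in S is the blossom b(opar u)          *)
(*          (the parent of a non-root blossom with base B is the odd       *)
(*          vertex mate B)                                                 *)
(*  cp    : the augmenting paths of CP, each recorded by its pair of       *)
(*          free end vertices (root of the tree, free vertex y)            *)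
(*  seen  : free vertices already handled by the outer loop                *)
(*  stack : the stack of executing / pending calls of find_ap:             *)
(*          Call x  = call find_ap(x) about to start;                      *)
(*          Scan x R = find_ap(x) executing, R = non-matching neighbours   *)
(*                     of x not yet scanned                                *)
(*  compl : even vertices x that are completely scanned                    *)

datatype 'v frame = Call 'v | Scan 'v "'v set"

record 'v state =
  ev    :: "'v set"
  od    :: "'v set"
  base  :: "'v \<Rightarrow> 'v"
  opar  :: "'v \<Rightarrow> 'v"
  root  :: 'v
  cp    :: "('v \<times> 'v) set"
  seen  :: "'v set"
  stack :: "'v frame list"
  compl :: "'v set"

definition inS :: "('v, 'a) state_scheme \<Rightarrow> 'v \<Rightarrow> bool" where
  "inS s v \<longleftrightarrow> v \<in> ev s \<or> v \<in> od s"

(* vertices lying on some path of CP: an alternating path's only free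
   vertices are its two ends, so for free vertices this is exact *)
definition on_cp :: "('v, 'a) state_scheme \<Rightarrow> 'v \<Rightarrow> bool" where
  "on_cp s v \<longleftrightarrow> (\<exists>a b. (a,b) \<in> cp s \<and> (v = a \<or> v = b))"

(* child relation between blossoms (identified by their bases):
   (B, B') means the blossom with base B is a grandchild of blossom B'
   in S, via the odd vertex mate B. *)
definition bchild :: "('v \<times> 'v) set \<Rightarrow> ('v, 'a) state_scheme \<Rightarrow> ('v \<times> 'v) set" where
  "bchild M s = {(B, base s (opar s (mate M B))) | B.
      B \<in> ev s \<and> base s B = B \<and> matched M B \<and> mate M B \<in> od s}"

definition init_state :: "'v state" where
  "init_state = \<lparr> ev = {}, od = {}, base = (\<lambda>v. v), opar = (\<lambda>v. v), root = undefined,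
                  cp = {}, seen = {}, stack = [], compl = {} \<rparr>"

inductive step :: "'v set \<Rightarrow> ('v \<times> 'v) set \<Rightarrow> ('v \<times> 'v) set \<Rightarrow> 'v state \<Rightarrow> 'v state \<Rightarrow> bool"
  for V :: "'v set" and E :: "('v \<times> 'v) set" and M :: "('v \<times> 'v) set" where
  outer_skip:
  "\<lbrakk> stack s = []; free V M f; f \<notin> seen s; on_cp s f \<rbrakk>
   \<Longrightarrow> step V E M s (s\<lparr> seen := insert f (seen s) \<rparr>)"
| outer_start:
  "\<lbrakk> stack s = []; free V M f; f \<notin> seen s; \<not> on_cp s f \<rbrakk>
   \<Longrightarrow> step V E M s (s\<lparr> seen := insert f (seen s), ev := insert f (ev s),
                         base := (base s)(f := f), root := f, stack := [Call f] \<rparr>)"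
| call:
  "stack s = Call x # rest
   \<Longrightarrow> step V E M s (s\<lparr> stack := Scan x {y. (x,y) \<in> E - M} # rest \<rparr>)"
| finish:
  "stack s = Scan x {} # rest
   \<Longrightarrow> step V E M s (s\<lparr> stack := rest, compl := insert x (compl s) \<rparr>)"
  (* scan xy, y not in S and free: augmenting path, terminate all calls *)
| augment:
  "\<lbrakk> stack s = Scan x R # rest; y \<in> R; \<not> inS s y; free V M y \<rbrakk>
   \<Longrightarrow> step V E M s (s\<lparr> od := insert y (od s), opar := (opar s)(y := x),
                         cp := insert (root s, y) (cp s), stack := [] \<rparr>)"
| grow:
  "\<lbrakk> stack s = Scan x R # rest; y \<in> R; \<not> inS s y; \<not> free V M y \<rbrakk>
   \<Longrightarrow> step V E M s (s\<lparr> od := insert y (od s), opar := (opar s)(y := x),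
                         ev := insert (mate M y) (ev s),
                         base := (base s)(mate M y := mate M y),
                         stack := Call (mate M y) # Scan x (R - {y}) # rest \<rparr>)"
  (* P = bases of the blossoms strictly below b(x) on the tree path to b(y);
     us = the odd vertices u_1,...,u_k on this path, u_1 closest to b(x). *)
| blossom:
  "\<lbrakk> stack s = Scan x R # rest; y \<in> R; y \<in> ev s;
     (base s y, base s x) \<in> (bchild M s)\<^sup>+;
     P = {B. (base s y, B) \<in> (bchild M s)\<^sup>* \<and> (B, base s x) \<in> (bchild M s)\<^sup>+};
     distinct us; set us = mate M ` P;
     \<forall>i j. i < j \<and> j < length us \<longrightarrow>
        (mate M (us ! j), mate M (us ! i)) \<in> (bchild M s)\<^sup>+ \<rbrakk>
   \<Longrightarrow> step V E M s (s\<lparr> ev := ev s \<union> set us, od := od s - set us,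
                         base := (\<lambda>z. if (z \<in> ev s \<and> (base s z \<in> P \<or> base s z = base s x))
                                          \<or> z \<in> set us then base s x else base s z),
                         stack := map Call us @ Scan x (R - {y}) # rest \<rparr>)"
| nothing:
  "\<lbrakk> stack s = Scan x R # rest; y \<in> R; inS s y;
     \<not> (y \<in> ev s \<and> (base s y, base s x) \<in> (bchild M s)\<^sup>+) \<rbrakk>
   \<Longrightarrow> step V E M s (s\<lparr> stack := Scan x (R - {y}) # rest \<rparr>)"

end

theory Submission
  imports Defs
begin

(*
  The theorem is the case "y completely scanned" of an invariant: if x is completely scanned,
  xy is a non-matching edge and y is even, then x and y lie in the same blossom, or else y is
  not completely scanned and every active call find_ap(y) still has the edge yx to scan.  The
  second alternative cannot survive the return of find_ap(y): when it scans yx, the blossom of x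
  is a descendant of the blossom of y, so either they already coincide or the blossom step
  merges them.  Matching edges between even vertices always lie inside a blossom.
  The remaining invariants describe the search forest and the call stack (the blossoms of the
  active calls form a chain in S) just well enough to be preserved by every step; the delicate
  one is the blossom step, which contracts a tree path and turns odd vertices even.
*)

section \<open>Matchings, blossom trees and call stacks\<close>

lemma trancl_insert_fresh:
  assumes "c \<notin> Range r"
  shows "(insert (c, d) r)\<^sup>+ = r\<^sup>+ \<union> {(c, b) | b. (d, b) \<in> r\<^sup>*}"
proof -
  have "(a, c) \<in> r\<^sup>* \<longleftrightarrow> a = c" for a using assms by (auto elim: rtranclE)
  then show ?thesis unfolding trancl_insert by auto
qed

lemma mate_eq:
  assumes "matching E M" "(v, u) \<in> M"
  shows "mate M v = u"
  using assms unfolding mate_def matching_def by blast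

lemma matched_mate:
  assumes "matching E M" "matched M v"
  shows "(v, mate M v) \<in> M"
  using assms mate_eq unfolding matched_def by metis

lemma mate_matched:
  assumes "matching E M" "matched M v"
  shows "(mate M v, v) \<in> M"
  using matched_mate[OF assms] assms(1) unfolding matching_def sym_def by blast

lemma mate_mate:
  assumes "matching E M" "matched M v"
  shows "mate M (mate M v) = v" and "matched M (mate M v)"
  using mate_matched[OF assms] mate_eq[OF assms(1)] unfolding matched_def by blast+

lemma free_not_mate:
  assumes "matching E M" "\<not> matched M f" "matched M v"
  shows "mate M v \<noteq> f"
  using mate_mate[OF assms(1,3)] assms(2) by metis

lemma matched_neq_mate:
  assumes "graph V E" "matching E M" "matched M v"
  shows "mate M v \<noteq> v"
  using matched_mate[OF assms(2,3)] assms(1,2)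
  unfolding graph_def matching_def irrefl_def by force

lemma non_matching_edge_sym:
  assumes "graph V E" "matching E M" "(a, b) \<in> E - M"
  shows "(b, a) \<in> E - M"
  using assms unfolding graph_def matching_def sym_def by blast

lemma edge_neq:
  assumes "graph V E" "(a, b) \<in> E"
  shows "a \<noteq> b"
  using assms unfolding graph_def irrefl_def by blast

lemma bchild_iff:
  "(B, p) \<in> bchild M s \<longleftrightarrow> B \<in> ev s \<and> base s B = B \<and> matched M B \<and> mate M B \<in> od s
     \<and> p = base s (opar s (mate M B))"
  unfolding bchild_def by auto

lemma bchild_functional: "(B, p) \<in> bchild M s \<Longrightarrow> (B, q) \<in> bchild M s \<Longrightarrow> p = q"
  unfolding bchild_iff by simp

lemma bchild_cong:
  "ev t = ev s \<Longrightarrow> od t = od s \<Longrightarrow> base t = base s \<Longrightarrow> opar t = opar s \<Longrightarrow> bchild M t = bchild M s"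
  by (simp add: bchild_def)

fun frame_vertex :: "'v frame \<Rightarrow> 'v" where
  "frame_vertex (Call v) = v"
| "frame_vertex (Scan v R) = v"

lemma split_stack_at_Scan:
  assumes "map Call us @ Scan x R # rest = pre @ Scan y R' # post"
  shows "pre = map Call us \<and> y = x \<and> R' = R \<and> post = rest \<or>
    (\<exists>pre'. pre = map Call us @ Scan x R # pre' \<and> rest = pre' @ Scan y R' # post)"
  using assms
proof (induction us arbitrary: pre)
  case Nil
  then show ?case by (cases pre) auto
next
  case (Cons u us)
  then obtain pre0 where "pre = Call u # pre0" by (cases pre) auto
  with Cons show ?case by auto
qed

lemma replace_top_frame:
  assumes "g # rest = pre @ Scan w R # post" "v \<in> frame_vertex ` set pre"
    and "frame_vertex f = frame_vertex g"
  obtains pre' where "f # rest = pre' @ Scan w R # post" "v \<in> frame_vertex ` set pre'"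
proof (cases pre)
  case (Cons g' pre')
  then show ?thesis using that[of "f # pre'"] assms by auto
qed (use assms in simp)

section \<open>Invariants of the search\<close>

locale matching_graph =
  fixes V :: "'v set" and E M :: "('v \<times> 'v) set"
  assumes graph: "graph V E" and matching: "matching E M"

locale search_forest = matching_graph +
  fixes s :: "'v state"
  assumes even_odd_disjoint: "ev s \<inter> od s = {}"
    and base_even: "z \<in> ev s \<Longrightarrow> base s z \<in> ev s"
    and base_idem: "z \<in> ev s \<Longrightarrow> base s (base s z) = base s z"
    and odd_parent_even: "u \<in> od s \<Longrightarrow> opar s u \<in> ev s"
    and odd_mate_even: "u \<in> od s \<Longrightarrow> matched M u \<Longrightarrow> mate M u \<in> ev s"
    and odd_mate_base: "u \<in> od s \<Longrightarrow> matched M u \<Longrightarrow> base s (mate M u) = mate M u"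
    and mate_inS: "inS s z \<Longrightarrow> matched M z \<Longrightarrow> inS s (mate M z)"
    and even_mate_same_base:
      "z \<in> ev s \<Longrightarrow> matched M z \<Longrightarrow> mate M z \<in> ev s \<Longrightarrow> base s z = base s (mate M z)"
    and free_inS_handled: "inS s z \<Longrightarrow> \<not> matched M z \<Longrightarrow> z \<in> seen s \<or> on_cp s z"
    and bchild_acyclic: "(B, B) \<notin> (bchild M s)\<^sup>+"

(* (b, b') \<in> (bchild M s)\<^sup>* says that the blossom with base b is a descendant of the blossom
   with base b' or equal to it. *)
locale search_invariants = search_forest +
  assumes compl_even: "x \<in> compl s \<Longrightarrow> x \<in> ev s"
    and frame_even: "f \<in> set (stack s) \<Longrightarrow> frame_vertex f \<in> ev s"
    and pending_edge: "Scan x R \<in> set (stack s) \<Longrightarrow> y \<in> R \<Longrightarrow> (x, y) \<in> E - M"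
    and stack_descending:
      "sorted_wrt (\<lambda>a b. (base s a, base s b) \<in> (bchild M s)\<^sup>*) (map frame_vertex (stack s))"
    and compl_neighbour_inS: "x \<in> compl s \<Longrightarrow> (x, y) \<in> E - M \<Longrightarrow> inS s y"
    and scanned_neighbour_inS:
      "Scan x R \<in> set (stack s) \<Longrightarrow> (x, y) \<in> E - M \<Longrightarrow> y \<notin> R \<Longrightarrow> inS s y"
    and compl_even_neighbour:
      "x \<in> compl s \<Longrightarrow> (x, y) \<in> E - M \<Longrightarrow> y \<in> ev s \<Longrightarrow>
       base s x = base s y \<or> y \<notin> compl s \<and> (\<forall>R. Scan y R \<in> set (stack s) \<longrightarrow> x \<in> R)"
    and compl_neighbour_below_active:
      "x \<in> compl s \<Longrightarrow> (x, y) \<in> E - M \<Longrightarrow>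
       Call y \<in> set (stack s) \<or> (\<exists>R. Scan y R \<in> set (stack s) \<and> x \<in> R) \<Longrightarrow>
       (base s x, base s y) \<in> (bchild M s)\<^sup>*"
    and compl_odd_neighbour_below_frame:
      "u \<in> od s \<Longrightarrow> matched M u \<Longrightarrow> x \<in> compl s \<Longrightarrow> (x, u) \<in> E - M \<Longrightarrow>
       v \<in> frame_vertex ` set (stack s) \<Longrightarrow> (mate M u, base s v) \<in> (bchild M s)\<^sup>+ \<Longrightarrow>
       (base s x, base s v) \<in> (bchild M s)\<^sup>*"
    and scanned_even_neighbour_above:
      "stack s = pre @ Scan y R # post \<Longrightarrow> x \<in> ev s \<Longrightarrow> (y, x) \<in> E - M \<Longrightarrow> x \<notin> R \<Longrightarrow>
       x \<in> frame_vertex ` set pre \<Longrightarrow> base s x = base s y"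
    and scanned_odd_neighbour_above:
      "stack s = pre @ Scan y R # post \<Longrightarrow> u \<in> od s \<Longrightarrow> matched M u \<Longrightarrow> (y, u) \<in> E - M \<Longrightarrow>
       u \<notin> R \<Longrightarrow> v \<in> frame_vertex ` set pre \<Longrightarrow> (mate M u, base s v) \<in> (bchild M s)\<^sup>+ \<Longrightarrow>
       base s v = base s y"

lemma (in matching_graph) search_invariants_init: "search_invariants V E M init_state"
  by unfold_locales (simp_all add: graph matching init_state_def bchild_def inS_def)

context search_forest
begin

lemma bchild_trancl_target_even: "(a, b) \<in> (bchild M s)\<^sup>+ \<Longrightarrow> b \<in> ev s"
  by (induction rule: trancl.induct) (auto simp: bchild_iff base_even odd_parent_even)

lemma search_forest_update:
  assumes "ev t = ev s" "od t = od s" "base t = base s" "opar t = opar s"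
    and "seen s \<subseteq> seen t" "cp s \<subseteq> cp t"
  shows "search_forest V E M t"
proof -
  have inS_t: "inS t = inS s" using assms(1,2) by (simp add: inS_def[abs_def])
  have bchild_t: "bchild M t = bchild M s" using assms(1-4) by (rule bchild_cong)
  have free_t: "z \<in> seen t \<or> on_cp t z" if "inS t z" "\<not> matched M z" for z
    using free_inS_handled[of z] that assms(5,6) unfolding inS_t on_cp_def by blast
  show ?thesis
  proof (intro search_forest.intro search_forest_axioms.intro)
    show "matching_graph V E M" by (rule matching_graph_axioms)
  qed (simp_all add: free_t assms(1-4) inS_t bchild_t even_odd_disjoint base_even base_idem
      odd_parent_even odd_mate_even odd_mate_base mate_inS even_mate_same_base[symmetric]
      bchild_acyclic)
qed

end

section \<open>Steps other than grow and blossom\<close>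

context search_invariants
begin

lemma frame_vertex_even: "v \<in> frame_vertex ` set (stack s) \<Longrightarrow> v \<in> ev s"
  using frame_even by auto

lemma top_frame_update:
  assumes top: "stack s = f # rest" "frame_vertex f = x"
    and same: "ev t = ev s" "od t = od s" "base t = base s" "opar t = opar s"
      "seen t = seen s" "cp t = cp s" "compl t = compl s"
    and top_t: "stack t = Scan x R # rest"
    and pending: "\<And>y. y \<in> R \<Longrightarrow> (x, y) \<in> E - M"
    and scanned: "\<And>y. (x, y) \<in> E - M \<Longrightarrow> y \<notin> R \<Longrightarrow> inS s y"
    and compl_pending: "\<And>z. z \<in> compl s \<Longrightarrow> (z, x) \<in> E - M \<Longrightarrow> base s z \<noteq> base s x \<Longrightarrow> z \<in> R"
    and compl_below: "\<And>z. z \<in> compl s \<Longrightarrow> (z, x) \<in> E - M \<Longrightarrow> z \<in> R \<Longrightarrow>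
      (base s z, base s x) \<in> (bchild M s)\<^sup>*"
  shows "search_invariants V E M t"
proof (intro search_invariants.intro search_invariants_axioms.intro)
  have bchild_t: "bchild M t = bchild M s" using same(1-4) by (rule bchild_cong)
  have inS_t: "inS t = inS s" using same by (simp add: inS_def[abs_def])
  have f_in: "f \<in> set (stack s)" using top by simp
  have rest_in: "g \<in> set (stack s)" if "g \<in> set rest" for g using that top by simp
  have frames_t: "set (stack t) = insert (Scan x R) (set rest)" using top_t by simp
  have vertices_t: "frame_vertex ` set (stack t) = frame_vertex ` set (stack s)"
    using top top_t by simp
  show "search_forest V E M t" by (rule search_forest_update) (simp_all add: same)
  show "z \<in> ev t" if "z \<in> compl t" for z using that compl_even same by simp
  show "frame_vertex g \<in> ev t" if "g \<in> set (stack t)" for g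
    using that frame_even[OF f_in] frame_even[OF rest_in] top(2) unfolding frames_t same by auto
  show "(z, w) \<in> E - M" if "Scan z R' \<in> set (stack t)" "w \<in> R'" for z R' w
    using that pending pending_edge[OF rest_in] unfolding frames_t by auto
  show "sorted_wrt (\<lambda>a b. (base t a, base t b) \<in> (bchild M t)\<^sup>*) (map frame_vertex (stack t))"
    using stack_descending top top_t unfolding bchild_t same by simp
  show "inS t w" if "z \<in> compl t" "(z, w) \<in> E - M" for z w
    using that compl_neighbour_inS unfolding inS_t same by blast
  show "inS t w" if "Scan z R' \<in> set (stack t)" "(z, w) \<in> E - M" "w \<notin> R'" for z R' w
    using that scanned scanned_neighbour_inS[OF rest_in] unfolding frames_t inS_t by auto
  show "base t z = base t w \<or> w \<notin> compl t \<and> (\<forall>R'. Scan w R' \<in> set (stack t) \<longrightarrow> z \<in> R')"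
    if "z \<in> compl t" "(z, w) \<in> E - M" "w \<in> ev t" for z w
  proof -
    have "base s z = base s w \<or> w \<notin> compl s \<and> (\<forall>R'. Scan w R' \<in> set rest \<longrightarrow> z \<in> R')"
      using compl_even_neighbour[of z w] that rest_in unfolding same by blast
    moreover have "z \<in> R" if "w = x" "base s z \<noteq> base s w"
      using compl_pending \<open>z \<in> compl t\<close> \<open>(z, w) \<in> E - M\<close> that unfolding same by blast
    ultimately show ?thesis unfolding frames_t same by auto
  qed
  show "(base t z, base t w) \<in> (bchild M t)\<^sup>*"
    if "z \<in> compl t" "(z, w) \<in> E - M"
      "Call w \<in> set (stack t) \<or> (\<exists>R'. Scan w R' \<in> set (stack t) \<and> z \<in> R')" for z w
  proof (cases "Scan w R \<in> set (stack t) \<and> w = x \<and> z \<in> R")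
    case True
    then show ?thesis using compl_below that(1,2) unfolding bchild_t same by blast
  next
    case False
    then have "Call w \<in> set (stack s) \<or> (\<exists>R'. Scan w R' \<in> set (stack s) \<and> z \<in> R')"
      using that(3) rest_in unfolding frames_t by auto
    then show ?thesis
      using compl_neighbour_below_active that(1,2) unfolding bchild_t same by blast
  qed
  show "(base t z, base t v) \<in> (bchild M t)\<^sup>*"
    if "u \<in> od t" "matched M u" "z \<in> compl t" "(z, u) \<in> E - M"
      "v \<in> frame_vertex ` set (stack t)" "(mate M u, base t v) \<in> (bchild M t)\<^sup>+" for u z v
    using that compl_odd_neighbour_below_frame[of u z v] unfolding vertices_t bchild_t same by blast
  show "base t z = base t w"
    if split: "stack t = pre @ Scan w R' # post" and "z \<in> ev t" "(w, z) \<in> E - M" "z \<notin> R'"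
      and above: "z \<in> frame_vertex ` set pre" for pre w R' post z
  proof -
    obtain pre' where "f # rest = pre' @ Scan w R' # post" "z \<in> frame_vertex ` set pre'"
      by (rule replace_top_frame[OF split[unfolded top_t] above, of f]) (simp add: top(2))
    then have "stack s = pre' @ Scan w R' # post" "z \<in> frame_vertex ` set pre'"
      using top(1) by simp_all
    then have "base s z = base s w"
      using scanned_even_neighbour_above that(2-4) unfolding same by blast
    then show ?thesis using same by simp
  qed
  show "base t v = base t w"
    if split: "stack t = pre @ Scan w R' # post"
      and "u \<in> od t" "matched M u" "(w, u) \<in> E - M" "u \<notin> R'"
      and above: "v \<in> frame_vertex ` set pre"
      and "(mate M u, base t v) \<in> (bchild M t)\<^sup>+" for pre w R' post u v
  proof -
    obtain pre' where "f # rest = pre' @ Scan w R' # post" "v \<in> frame_vertex ` set pre'"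
      by (rule replace_top_frame[OF split[unfolded top_t] above, of f]) (simp add: top(2))
    then have "stack s = pre' @ Scan w R' # post" "v \<in> frame_vertex ` set pre'"
      using top(1) by simp_all
    then have "base s v = base s w"
      using scanned_odd_neighbour_above that(2-5,7) unfolding bchild_t same by blast
    then show ?thesis using same by simp
  qed
qed

lemma call_step_invariants:
  assumes top: "stack s = Call x # rest"
  shows "search_invariants V E M (s\<lparr>stack := Scan x {y. (x, y) \<in> E - M} # rest\<rparr>)"
proof (rule top_frame_update[OF top, where x = x and R = "{y. (x, y) \<in> E - M}"])
  show "(base s z, base s x) \<in> (bchild M s)\<^sup>*" if "z \<in> compl s" "(z, x) \<in> E - M" for z
    using compl_neighbour_below_active[OF that] top by simp
  show "z \<in> {y. (x, y) \<in> E - M}" if "(z, x) \<in> E - M" for z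
    using non_matching_edge_sym[OF graph matching that] by simp
qed simp_all

lemma nothing_step_invariants:
  assumes top: "stack s = Scan x R # rest" and y: "y \<in> R" "inS s y"
    and not_descendant: "\<not> (y \<in> ev s \<and> (base s y, base s x) \<in> (bchild M s)\<^sup>+)"
  shows "search_invariants V E M (s\<lparr>stack := Scan x (R - {y}) # rest\<rparr>)"
proof (rule top_frame_update[OF top, where x = x and R = "R - {y}"])
  have x_scanning: "Scan x R \<in> set (stack s)" using top by simp
  then show "(x, w) \<in> E - M" if "w \<in> R - {y}" for w
    using pending_edge that by blast
  show "inS s w" if "(x, w) \<in> E - M" "w \<notin> R - {y}" for w
    using scanned_neighbour_inS[OF x_scanning] y(2) that by blast
  have below: "(base s z, base s x) \<in> (bchild M s)\<^sup>*"
    if "z \<in> compl s" "(z, x) \<in> E - M" "z \<in> R" for z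
    using compl_neighbour_below_active[OF that(1,2)] x_scanning that(3) by blast
  then show "(base s z, base s x) \<in> (bchild M s)\<^sup>*"
    if "z \<in> compl s" "(z, x) \<in> E - M" "z \<in> R - {y}" for z
    using that by blast
  show "z \<in> R - {y}" if "z \<in> compl s" "(z, x) \<in> E - M" "base s z \<noteq> base s x" for z
  proof
    have "x \<in> ev s" using frame_even[OF x_scanning] by simp
    then show "z \<in> R"
      using compl_even_neighbour[OF that(1,2)] that(3) x_scanning by blast
    then have "(base s z, base s x) \<in> (bchild M s)\<^sup>*" using below that(1,2) by blast
    \<comment> \<open>a completed y lies below x but not strictly below, as no blossom step happens\<close>
    then show "z \<notin> {y}"
      using not_descendant compl_even[OF that(1)] that(3) by (auto simp: rtrancl_eq_or_trancl)
  qed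
qed simp_all

lemma finish_step_compl_even_neighbour:
  assumes top: "stack s = Scan x {} # rest"
    and "z \<in> insert x (compl s)" and zw: "(z, w) \<in> E - M" and "w \<in> ev s"
  shows "base s z = base s w \<or> w \<notin> insert x (compl s) \<and> (\<forall>R. Scan w R \<in> set rest \<longrightarrow> z \<in> R)"
proof (cases "base s z = base s w")
  case different: False
  have x_done: "Scan x {} \<in> set (stack s)" using top by simp
  have x_even: "x \<in> ev s" using frame_even[OF x_done] by simp
  show ?thesis
  proof (cases "z = x")
    case True
    have "w \<noteq> x" using edge_neq[OF graph] zw True by blast
    \<comment> \<open>otherwise the edge wx would still be pending in the frame of x, which is empty\<close>
    moreover have "w \<notin> compl s"
    proof
      assume "w \<in> compl s"
      moreover have "(w, x) \<in> E - M" using non_matching_edge_sym[OF graph matching zw] True by simp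
      ultimately show False
        using compl_even_neighbour[of w x] x_even x_done different True by auto
    qed
    moreover have "z \<in> R" if w_scanning: "Scan w R \<in> set rest" for R
    proof (rule ccontr)
      assume "z \<notin> R"
      obtain pre post where "rest = pre @ Scan w R # post" using split_list[OF w_scanning] by blast
      then have "stack s = (Scan x {} # pre) @ Scan w R # post" using top by simp
      then have "base s z = base s w"
        by (rule scanned_even_neighbour_above)
          (use \<open>z \<notin> R\<close> True x_even non_matching_edge_sym[OF graph matching zw] in auto)
      then show False using different by simp
    qed
    ultimately show ?thesis by simp
  next
    case False
    then have "w \<notin> compl s \<and> (\<forall>R. Scan w R \<in> set (stack s) \<longrightarrow> z \<in> R)"
      using compl_even_neighbour[of z w] assms(2-4) different by simp
    then show ?thesis using x_done top by fastforce
  qed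
qed simp

lemma finish_step_invariants:
  assumes top: "stack s = Scan x {} # rest"
  shows "search_invariants V E M (s\<lparr>stack := rest, compl := insert x (compl s)\<rparr>)"
    (is "search_invariants V E M ?t")
proof (intro search_invariants.intro search_invariants_axioms.intro)
  have bchild_t: "bchild M ?t = bchild M s" by (rule bchild_cong) simp_all
  have x_done: "Scan x {} \<in> set (stack s)" using top by simp
  have x_even: "x \<in> ev s" using frame_even[OF x_done] by simp
  have rest_in: "g \<in> set (stack s)" if "g \<in> set rest" for g using that top by simp
  have x_below_rest: "(base s x, base s v) \<in> (bchild M s)\<^sup>*" if "v \<in> frame_vertex ` set rest" for v
    using stack_descending that top by auto
  show "search_forest V E M ?t" by (rule search_forest_update) auto
  show "z \<in> ev ?t" if "z \<in> compl ?t" for z using that compl_even x_even by auto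
  show "frame_vertex g \<in> ev ?t" if "g \<in> set (stack ?t)" for g
    using that frame_even rest_in by simp
  show "(z, w) \<in> E - M" if "Scan z R \<in> set (stack ?t)" "w \<in> R" for z R w
    using pending_edge[OF rest_in] that by simp
  show "sorted_wrt (\<lambda>a b. (base ?t a, base ?t b) \<in> (bchild M ?t)\<^sup>*) (map frame_vertex (stack ?t))"
    using stack_descending top unfolding bchild_t by simp
  show "inS ?t w" if "z \<in> compl ?t" "(z, w) \<in> E - M" for z w
    using that compl_neighbour_inS scanned_neighbour_inS[OF x_done] by (auto simp: inS_def)
  show "inS ?t w" if "Scan z R \<in> set (stack ?t)" "(z, w) \<in> E - M" "w \<notin> R" for z R w
    using scanned_neighbour_inS[OF rest_in] that by (simp add: inS_def)
  show "base ?t z = base ?t w \<or> w \<notin> compl ?t \<and> (\<forall>R. Scan w R \<in> set (stack ?t) \<longrightarrow> z \<in> R)"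
    if "z \<in> compl ?t" "(z, w) \<in> E - M" "w \<in> ev ?t" for z w
    using finish_step_compl_even_neighbour[OF top] that by simp
  show "(base ?t z, base ?t w) \<in> (bchild M ?t)\<^sup>*"
    if "z \<in> compl ?t" "(z, w) \<in> E - M"
      "Call w \<in> set (stack ?t) \<or> (\<exists>R. Scan w R \<in> set (stack ?t) \<and> z \<in> R)" for z w
  proof (cases "z = x")
    case True
    have "w \<in> frame_vertex ` set rest" using that(3) by force
    then show ?thesis using x_below_rest True unfolding bchild_t by simp
  next
    case False
    then show ?thesis
      using that compl_neighbour_below_active[of z w] rest_in unfolding bchild_t by auto
  qed
  show "(base ?t z, base ?t v) \<in> (bchild M ?t)\<^sup>*"
    if "u \<in> od ?t" "matched M u" "z \<in> compl ?t" "(z, u) \<in> E - M"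
      "v \<in> frame_vertex ` set (stack ?t)" "(mate M u, base ?t v) \<in> (bchild M ?t)\<^sup>+" for u z v
  proof (cases "z = x")
    case True
    then show ?thesis using x_below_rest that(5) unfolding bchild_t by simp
  next
    case False
    have "v \<in> frame_vertex ` set (stack s)" using that(5) top by auto
    then show ?thesis
      using that False compl_odd_neighbour_below_frame[of u z v] unfolding bchild_t by simp
  qed
  show "base ?t z = base ?t w"
    if "stack ?t = pre @ Scan w R # post" "z \<in> ev ?t" "(w, z) \<in> E - M" "z \<notin> R"
      "z \<in> frame_vertex ` set pre" for pre w R post z
  proof -
    have "stack s = (Scan x {} # pre) @ Scan w R # post" using that(1) top by simp
    then have "base s z = base s w"
      by (rule scanned_even_neighbour_above) (use that in auto)
    then show ?thesis by simp
  qed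
  show "base ?t v = base ?t w"
    if "stack ?t = pre @ Scan w R # post" "u \<in> od ?t" "matched M u" "(w, u) \<in> E - M" "u \<notin> R"
      "v \<in> frame_vertex ` set pre" "(mate M u, base ?t v) \<in> (bchild M ?t)\<^sup>+" for pre w R post u v
  proof -
    have "stack s = (Scan x {} # pre) @ Scan w R # post" using that(1) top by simp
    then have "base s v = base s w"
      by (rule scanned_odd_neighbour_above) (use that bchild_t in auto)
    then show ?thesis by simp
  qed
qed

lemma skip_step_invariants: "search_invariants V E M (s\<lparr>seen := insert f (seen s)\<rparr>)"
  (is "search_invariants V E M ?t")
proof -
  have same: "ev ?t = ev s" "od ?t = od s" "base ?t = base s" "stack ?t = stack s"
    "compl ?t = compl s"
    by simp_all
  have inS_t: "inS ?t = inS s" by (simp add: inS_def[abs_def])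
  have bchild_t: "bchild M ?t = bchild M s" by (rule bchild_cong) simp_all
  have forest: "search_forest V E M ?t" by (rule search_forest_update) auto
  show ?thesis
  proof (intro search_invariants.intro search_invariants_axioms.intro)
  qed (simp_all only: same inS_t bchild_t,
    (fact forest compl_even frame_even pending_edge stack_descending compl_neighbour_inS
      scanned_neighbour_inS compl_even_neighbour compl_neighbour_below_active
      compl_odd_neighbour_below_frame scanned_even_neighbour_above scanned_odd_neighbour_above)+)
qed

lemma augment_step_invariants:
  assumes top: "stack s = Scan x R # rest" and y: "y \<in> R" "\<not> inS s y" "free V M y"
  shows "search_invariants V E M (s\<lparr>od := insert y (od s), opar := (opar s)(y := x),
    cp := insert (root s, y) (cp s), stack := []\<rparr>)"
    (is "search_invariants V E M ?t")
proof (intro search_invariants.intro search_forest.intro search_invariants_axioms.intro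
    search_forest_axioms.intro)
  have y_unmatched: "\<not> matched M y" using y(3) unfolding free_def by simp
  have y_new: "y \<notin> ev s" "y \<notin> od s" using y(2) unfolding inS_def by auto
  have x_even: "x \<in> ev s" using frame_even[of "Scan x R"] top by simp
  have inS_t: "inS ?t z \<longleftrightarrow> inS s z \<or> z = y" for z unfolding inS_def by auto
  have bchild_t: "bchild M ?t = bchild M s"
    unfolding bchild_def using free_not_mate[OF matching y_unmatched] by auto
  show "matching_graph V E M" by (rule matching_graph_axioms)
  show "ev ?t \<inter> od ?t = {}" using even_odd_disjoint y_new by auto
  show "base ?t z \<in> ev ?t" "base ?t (base ?t z) = base ?t z" if "z \<in> ev ?t" for z
    using that base_even base_idem by simp_all
  show "opar ?t u \<in> ev ?t" if "u \<in> od ?t" for u using that odd_parent_even x_even by auto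
  show "mate M u \<in> ev ?t" "base ?t (mate M u) = mate M u" if "u \<in> od ?t" "matched M u" for u
    using that odd_mate_even odd_mate_base y_unmatched by auto
  show "inS ?t (mate M z)" if "inS ?t z" "matched M z" for z
    using that mate_inS y_unmatched unfolding inS_t by blast
  show "base ?t z = base ?t (mate M z)" if "z \<in> ev ?t" "matched M z" "mate M z \<in> ev ?t" for z
    using that even_mate_same_base by simp
  show "z \<in> seen ?t \<or> on_cp ?t z" if "inS ?t z" "\<not> matched M z" for z
    using that free_inS_handled unfolding inS_t on_cp_def by auto
  show "(B, B) \<notin> (bchild M ?t)\<^sup>+" for B using bchild_acyclic unfolding bchild_t .
  show "z \<in> ev ?t" if "z \<in> compl ?t" for z using that compl_even by simp
  show "inS ?t w" if "z \<in> compl ?t" "(z, w) \<in> E - M" for z w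
    using that compl_neighbour_inS unfolding inS_t by simp
  show "base ?t z = base ?t w \<or> w \<notin> compl ?t \<and> (\<forall>R. Scan w R \<in> set (stack ?t) \<longrightarrow> z \<in> R)"
    if "z \<in> compl ?t" "(z, w) \<in> E - M" "w \<in> ev ?t" for z w
    using that compl_even_neighbour[of z w] by auto
qed simp_all

lemma start_step_invariants:
  assumes "stack s = []" "free V M f" "f \<notin> seen s" "\<not> on_cp s f"
  shows "search_invariants V E M (s\<lparr>seen := insert f (seen s), ev := insert f (ev s),
    base := (base s)(f := f), root := f, stack := [Call f]\<rparr>)"
    (is "search_invariants V E M ?t")
proof (intro search_invariants.intro search_forest.intro search_invariants_axioms.intro
    search_forest_axioms.intro)
  have f_unmatched: "\<not> matched M f" using assms(2) unfolding free_def by simp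
  have f_new: "f \<notin> ev s" "f \<notin> od s"
    using free_inS_handled f_unmatched assms(3,4) unfolding inS_def by blast+
  have base_t: "base ?t z = base s z" if "z \<in> ev s" for z using that f_new by auto
  have inS_t: "inS ?t z \<longleftrightarrow> inS s z \<or> z = f" for z unfolding inS_def by auto
  have "(B, p) \<in> bchild M ?t \<longleftrightarrow> (B, p) \<in> bchild M s" for B p
    using f_unmatched base_t[of B] base_t[OF odd_parent_even[of "mate M B"]]
    unfolding bchild_iff by auto
  then have bchild_t: "bchild M ?t = bchild M s" by auto
  have not_adjacent: "(z, f) \<notin> E - M" if "z \<in> compl s" for z
    using compl_neighbour_inS that f_new unfolding inS_def by blast
  show "matching_graph V E M" by (rule matching_graph_axioms)
  show "ev ?t \<inter> od ?t = {}" using even_odd_disjoint f_new by auto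
  show "base ?t z \<in> ev ?t" "base ?t (base ?t z) = base ?t z" if "z \<in> ev ?t" for z
    using that base_t base_even base_idem by auto
  show "opar ?t u \<in> ev ?t" if "u \<in> od ?t" for u using that odd_parent_even by simp
  show "mate M u \<in> ev ?t" "base ?t (mate M u) = mate M u" if "u \<in> od ?t" "matched M u" for u
    using that odd_mate_even odd_mate_base base_t by auto
  show "inS ?t (mate M z)" if "inS ?t z" "matched M z" for z
    using that mate_inS f_unmatched unfolding inS_t by blast
  show "base ?t z = base ?t (mate M z)" if "z \<in> ev ?t" "matched M z" "mate M z \<in> ev ?t" for z
    using that even_mate_same_base free_not_mate[OF matching f_unmatched] base_t f_unmatched by auto
  show "z \<in> seen ?t \<or> on_cp ?t z" if "inS ?t z" "\<not> matched M z" for z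
    using that free_inS_handled unfolding inS_t on_cp_def by auto
  show "(B, B) \<notin> (bchild M ?t)\<^sup>+" for B using bchild_acyclic unfolding bchild_t .
  show "z \<in> ev ?t" if "z \<in> compl ?t" for z using that compl_even by simp
  show "inS ?t w" if "z \<in> compl ?t" "(z, w) \<in> E - M" for z w
    using that compl_neighbour_inS unfolding inS_t by simp
  show "base ?t z = base ?t w \<or> w \<notin> compl ?t \<and> (\<forall>R. Scan w R \<in> set (stack ?t) \<longrightarrow> z \<in> R)"
    if "z \<in> compl ?t" "(z, w) \<in> E - M" "w \<in> ev ?t" for z w
    using that compl_even_neighbour[of z w] not_adjacent compl_even base_t by auto
  show "(base ?t z, base ?t w) \<in> (bchild M ?t)\<^sup>*"
    if "z \<in> compl ?t" "(z, w) \<in> E - M"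
      "Call w \<in> set (stack ?t) \<or> (\<exists>R. Scan w R \<in> set (stack ?t) \<and> z \<in> R)" for z w
    using that not_adjacent by auto
  show "(base ?t z, base ?t v) \<in> (bchild M ?t)\<^sup>*"
    if "u \<in> od ?t" "matched M u" "z \<in> compl ?t" "(z, u) \<in> E - M"
      "v \<in> frame_vertex ` set (stack ?t)" "(mate M u, base ?t v) \<in> (bchild M ?t)\<^sup>+" for u z v
    using that bchild_trancl_target_even f_new unfolding bchild_t by auto
qed (auto simp: Cons_eq_append_conv)

end


section \<open>The grow step\<close>

locale scanning_step = search_invariants +
  fixes x R rest y
  assumes top: "stack s = Scan x R # rest" and y_pending: "y \<in> R"
begin

lemma x_scanning: "Scan x R \<in> set (stack s)"
  using top by simp

lemma x_even: "x \<in> ev s"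
  using frame_even[OF x_scanning] by simp

lemma rest_in_stack: "g \<in> set rest \<Longrightarrow> g \<in> set (stack s)"
  using top by simp

end

locale grow_step = scanning_step +
  assumes y_new: "\<not> inS s y" and y_not_free: "\<not> free V M y"
begin

definition grown where
  "grown = s\<lparr>od := insert y (od s), opar := (opar s)(y := x), ev := insert (mate M y) (ev s),
     base := (base s)(mate M y := mate M y), stack := Call (mate M y) # Scan x (R - {y}) # rest\<rparr>"

lemma grown_simps:
  "ev grown = insert (mate M y) (ev s)" "od grown = insert y (od s)" "opar grown = (opar s)(y := x)"
  "base grown = (base s)(mate M y := mate M y)"
  "stack grown = Call (mate M y) # Scan x (R - {y}) # rest"
  "compl grown = compl s" "seen grown = seen s" "cp grown = cp s"
  unfolding grown_def by simp_all

lemma y_matched: "matched M y"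
proof -
  have "(x, y) \<in> E" using pending_edge[OF x_scanning y_pending] by simp
  then have "y \<in> V" using graph unfolding graph_def by auto
  then show ?thesis using y_not_free unfolding free_def by simp
qed

lemma mate_y: "matched M (mate M y)" "mate M (mate M y) = y" "mate M y \<noteq> y"
  using mate_mate[OF matching y_matched] matched_neq_mate[OF graph matching y_matched] by simp_all

lemma mate_y_new: "\<not> inS s (mate M y)"
  using mate_inS[of "mate M y"] mate_y y_new by auto

lemma new_vertices: "y \<notin> ev s" "y \<notin> od s" "mate M y \<notin> ev s" "mate M y \<notin> od s"
  using y_new mate_y_new unfolding inS_def by auto

lemma inS_grown: "inS grown z \<longleftrightarrow> inS s z \<or> z = y \<or> z = mate M y"
  unfolding inS_def grown_simps by auto

lemma base_grown: "z \<in> ev s \<Longrightarrow> base grown z = base s z"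
  using new_vertices unfolding grown_simps by auto

lemma bchild_grown: "bchild M grown = insert (mate M y, base s x) (bchild M s)"
proof -
  have not_y: "mate M B \<noteq> y" if "B \<in> ev s" "matched M B" for B
    using mate_mate[OF matching that(2)] that(1) new_vertices by metis
  have "(B, p) \<in> bchild M grown \<longleftrightarrow> (B, p) \<in> insert (mate M y, base s x) (bchild M s)" for B p
  proof (cases "B = mate M y")
    case True
    then show ?thesis
      using mate_y new_vertices base_grown[OF x_even] by (auto simp: bchild_iff grown_simps)
  next
    case B_old: False
    show ?thesis
    proof (cases "B \<in> ev s \<and> matched M B \<and> mate M B \<in> od s")
      case True
      then have "mate M B \<noteq> y" using not_y by blast
      with True have "B \<in> ev grown" "mate M B \<in> od grown" "base grown B = base s B"
        "base grown (opar grown (mate M B)) = base s (opar s (mate M B))"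
        using base_grown odd_parent_even by (simp_all add: grown_simps)
      then show ?thesis using True B_old by (auto simp: bchild_iff)
    next
      case False
      moreover have "B \<in> ev s" "mate M B \<noteq> y" if "B \<in> ev grown" "matched M B"
        using that B_old not_y unfolding grown_simps by auto
      ultimately show ?thesis using B_old by (auto simp: bchild_iff grown_simps)
    qed
  qed
  then show ?thesis by auto
qed

lemma bchild_grown_trancl:
  "(bchild M grown)\<^sup>+ = (bchild M s)\<^sup>+ \<union> {(mate M y, b) | b. (base s x, b) \<in> (bchild M s)\<^sup>*}"
proof -
  have "mate M y \<notin> Range (bchild M s)"
    using bchild_trancl_target_even new_vertices by blast
  then show ?thesis unfolding bchild_grown by (rule trancl_insert_fresh)
qed

lemma bchild_grown_trancl_target: "(a, b) \<in> (bchild M grown)\<^sup>+ \<Longrightarrow> b \<in> ev s"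
  using bchild_trancl_target_even base_even[OF x_even] unfolding bchild_grown_trancl
  by (auto simp: rtrancl_eq_or_trancl)

lemma bchild_grown_trancl_old:
  "(a, b) \<in> (bchild M grown)\<^sup>+ \<Longrightarrow> a \<noteq> mate M y \<Longrightarrow> (a, b) \<in> (bchild M s)\<^sup>+"
  unfolding bchild_grown_trancl by auto

lemma bchild_grown_rtrancl_mono: "(bchild M s)\<^sup>* \<subseteq> (bchild M grown)\<^sup>*"
  unfolding bchild_grown by (rule rtrancl_mono) auto

lemma grown_forest: "search_forest V E M grown"
proof (intro search_forest.intro search_forest_axioms.intro)
  show "matching_graph V E M" by (rule matching_graph_axioms)
  show "ev grown \<inter> od grown = {}"
    using even_odd_disjoint new_vertices mate_y unfolding grown_simps by auto
  show "base grown z \<in> ev grown" "base grown (base grown z) = base grown z" if "z \<in> ev grown" for z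
    using that base_grown base_even base_idem unfolding grown_simps by auto
  show "opar grown u \<in> ev grown" if "u \<in> od grown" for u
    using that odd_parent_even x_even unfolding grown_simps by auto
  show "mate M u \<in> ev grown" "base grown (mate M u) = mate M u"
    if "u \<in> od grown" "matched M u" for u
    using that odd_mate_even odd_mate_base base_grown unfolding grown_simps by auto
  show "inS grown (mate M z)" if "inS grown z" "matched M z" for z
    using that mate_inS mate_y unfolding inS_grown by auto
  show "base grown z = base grown (mate M z)"
    if "z \<in> ev grown" "matched M z" "mate M z \<in> ev grown" for z
  proof -
    have "z \<noteq> mate M y" using that(3) mate_y new_vertices unfolding grown_simps by auto
    moreover have "mate M z \<noteq> mate M y"
    proof
      assume "mate M z = mate M y"
      then have "z = y" using mate_mate(1)[OF matching that(2)] mate_y(2) by metis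
      then show False using that(1) \<open>z \<noteq> mate M y\<close> new_vertices unfolding grown_simps by simp
    qed
    ultimately show ?thesis
      using that even_mate_same_base base_grown unfolding grown_simps by simp
  qed
  show "z \<in> seen grown \<or> on_cp grown z" if "inS grown z" "\<not> matched M z" for z
    using that free_inS_handled y_matched mate_y unfolding inS_grown on_cp_def grown_simps by auto
  show "(B, B) \<notin> (bchild M grown)\<^sup>+" for B
    using bchild_acyclic bchild_grown_trancl_old bchild_grown_trancl_target new_vertices by blast
qed

lemma frames_grown: "set (stack grown) = {Call (mate M y), Scan x (R - {y})} \<union> set rest"
  unfolding grown_simps by simp

lemma compl_not_adjacent_new: "z \<in> compl s \<Longrightarrow> (z, y) \<notin> E - M \<and> (z, mate M y) \<notin> E - M"
  using compl_neighbour_inS y_new mate_y_new by blast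

lemma frame_vertices_grown:
  "map frame_vertex (stack grown) = mate M y # map frame_vertex (stack s)"
  using top unfolding grown_simps by simp

lemma x_below_frames: "v \<in> frame_vertex ` set (stack s) \<Longrightarrow> (base s x, base s v) \<in> (bchild M s)\<^sup>*"
  using stack_descending top by auto

lemma grown_stack_descending:
  "sorted_wrt (\<lambda>a b. (base grown a, base grown b) \<in> (bchild M grown)\<^sup>*)
    (map frame_vertex (stack grown))"
proof -
  have old_even: "v \<in> ev s" if "v \<in> set (map frame_vertex (stack s))" for v
    using that frame_even by auto
  have "sorted_wrt (\<lambda>a b. (base grown a, base grown b) \<in> (bchild M grown)\<^sup>*)
    (map frame_vertex (stack s))"
    using stack_descending
    by (rule sorted_wrt_mono_rel[rotated])
      (use old_even base_grown bchild_grown_rtrancl_mono in auto)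
  moreover have "(base grown (mate M y), base grown v) \<in> (bchild M grown)\<^sup>*"
    if "v \<in> set (map frame_vertex (stack s))" for v
  proof -
    have "(mate M y, base s x) \<in> bchild M grown" unfolding bchild_grown by simp
    moreover have "(base s x, base s v) \<in> (bchild M grown)\<^sup>*"
      using x_below_frames that bchild_grown_rtrancl_mono by auto
    ultimately show ?thesis using base_grown old_even that unfolding grown_simps by simp
  qed
  ultimately show ?thesis unfolding frame_vertices_grown by simp
qed

lemma grown_scanned_even_neighbour_above:
  assumes "stack grown = pre @ Scan w R' # post" "z \<in> ev grown" "(w, z) \<in> E - M" "z \<notin> R'"
    "z \<in> frame_vertex ` set pre"
  shows "base grown z = base grown w"
proof -
  have "map Call [mate M y] @ Scan x (R - {y}) # rest = pre @ Scan w R' # post"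
    using assms(1) unfolding grown_simps by simp
  from split_stack_at_Scan[OF this] show ?thesis
  proof (elim disjE exE conjE)
  assume "pre = map Call [mate M y]" "w = x" "R' = R - {y}"
  then have "inS s (mate M y)"
    using scanned_neighbour_inS[OF x_scanning, of z] assms(3-5) mate_y(3) by auto
  then show ?thesis using mate_y_new by simp
next
  fix pre'
  assume pre': "pre = map Call [mate M y] @ Scan x (R - {y}) # pre'" "rest = pre' @ Scan w R' # post"
  then have old_stack: "stack s = (Scan x R # pre') @ Scan w R' # post" using top by simp
  then have "inS s z" using scanned_neighbour_inS[of w R' z] assms(3,4) by simp
  then have "z \<noteq> mate M y" using mate_y_new by auto
  then have "z \<in> ev s" "z \<in> frame_vertex ` set (Scan x R # pre')"
    using assms(2,5) pre'(1) unfolding grown_simps by auto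
  then have "base s z = base s w"
    using scanned_even_neighbour_above[OF old_stack] assms(3,4) by blast
  moreover have "w \<in> ev s" using frame_even[of "Scan w R'"] old_stack by simp
  ultimately show ?thesis using base_grown \<open>z \<in> ev s\<close> by simp
qed
qed

lemma grown_scanned_odd_neighbour_above:
  assumes "stack grown = pre @ Scan w R' # post" "u \<in> od grown" "matched M u" "(w, u) \<in> E - M"
    "u \<notin> R'" "v \<in> frame_vertex ` set pre" "(mate M u, base grown v) \<in> (bchild M grown)\<^sup>+"
  shows "base grown v = base grown w"
proof -
  have "map Call [mate M y] @ Scan x (R - {y}) # rest = pre @ Scan w R' # post"
    using assms(1) unfolding grown_simps by simp
  from split_stack_at_Scan[OF this] show ?thesis
  proof (elim disjE exE conjE)
  assume "pre = map Call [mate M y]"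
  then have "v = mate M y" using assms(6) by simp
  then show ?thesis
    using bchild_grown_trancl_target[OF assms(7)] new_vertices base_grown
    unfolding grown_simps by simp
next
  fix pre'
  assume pre': "pre = map Call [mate M y] @ Scan x (R - {y}) # pre'" "rest = pre' @ Scan w R' # post"
  then have old_stack: "stack s = (Scan x R # pre') @ Scan w R' # post" using top by simp
  then have "u \<noteq> y" using scanned_neighbour_inS[of w R' u] assms(4,5) y_new by auto
  then have u_odd: "u \<in> od s" using assms(2) unfolding grown_simps by simp
  have "base grown v \<in> ev s" using bchild_grown_trancl_target[OF assms(7)] .
  then have "v \<noteq> mate M y" using new_vertices unfolding grown_simps by auto
  then have v_old: "v \<in> frame_vertex ` set (Scan x R # pre')"
    using assms(6) pre'(1) by auto
  then have "v \<in> ev s" using frame_vertex_even old_stack by auto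
  have "mate M u \<noteq> mate M y" using odd_mate_even[OF u_odd assms(3)] new_vertices by auto
  then have "(mate M u, base s v) \<in> (bchild M s)\<^sup>+"
    using bchild_grown_trancl_old assms(7) base_grown \<open>v \<in> ev s\<close> by simp
  then have "base s v = base s w"
    using scanned_odd_neighbour_above[OF old_stack u_odd assms(3,4,5) v_old] by blast
  moreover have "w \<in> ev s" using frame_even[of "Scan w R'"] old_stack by simp
  ultimately show ?thesis using base_grown \<open>v \<in> ev s\<close> by simp
qed
qed

lemma grown_compl_neighbour_below_active:
  assumes "z \<in> compl grown" "(z, w) \<in> E - M"
    "Call w \<in> set (stack grown) \<or> (\<exists>R'. Scan w R' \<in> set (stack grown) \<and> z \<in> R')"
  shows "(base grown z, base grown w) \<in> (bchild M grown)\<^sup>*"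
proof -
  have z: "z \<in> compl s" "z \<in> ev s" using assms(1) compl_even grown_simps by auto
  have "w \<noteq> mate M y" using assms(2) compl_not_adjacent_new[OF z(1)] by auto
  then have "Call w \<in> set (stack s) \<or> (\<exists>R'. Scan w R' \<in> set (stack s) \<and> z \<in> R')"
    using assms(3) x_scanning rest_in_stack unfolding frames_grown by auto
  moreover from this have "w \<in> ev s" using frame_even by force
  ultimately show ?thesis
    using compl_neighbour_below_active[OF z(1) assms(2)] base_grown z(2) bchild_grown_rtrancl_mono
    by auto
qed

lemma grown_compl_odd_neighbour_below_frame:
  assumes "u \<in> od grown" "matched M u" "z \<in> compl grown" "(z, u) \<in> E - M"
    "v \<in> frame_vertex ` set (stack grown)" "(mate M u, base grown v) \<in> (bchild M grown)\<^sup>+"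
  shows "(base grown z, base grown v) \<in> (bchild M grown)\<^sup>*"
proof -
  have z: "z \<in> compl s" "z \<in> ev s" using assms(3) compl_even grown_simps by auto
  have u: "u \<in> od s" using assms(1,4) compl_not_adjacent_new[OF z(1)] unfolding grown_simps by auto
  have "base grown v \<in> ev s" using bchild_grown_trancl_target[OF assms(6)] .
  then have "v \<noteq> mate M y" using new_vertices unfolding grown_simps by auto
  then have v: "v \<in> frame_vertex ` set (stack s)"
    using assms(5) frame_vertices_grown by (metis insert_iff list.simps(15) set_map)
  then have "v \<in> ev s" by (rule frame_vertex_even)
  have "mate M u \<noteq> mate M y" using odd_mate_even[OF u assms(2)] new_vertices by auto
  then have "(mate M u, base s v) \<in> (bchild M s)\<^sup>+"
    using bchild_grown_trancl_old assms(6) base_grown \<open>v \<in> ev s\<close> by simp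
  then have "(base s z, base s v) \<in> (bchild M s)\<^sup>*"
    using compl_odd_neighbour_below_frame[OF u assms(2) z(1) assms(4) v] by blast
  then show ?thesis using base_grown z(2) \<open>v \<in> ev s\<close> bchild_grown_rtrancl_mono by auto
qed

lemma grown_invariants: "search_invariants V E M grown"
proof (intro search_invariants.intro search_invariants_axioms.intro grown_forest
    grown_stack_descending)
  show "z \<in> ev grown" if "z \<in> compl grown" for z
    using that compl_even unfolding grown_simps by simp
  show "frame_vertex g \<in> ev grown" if "g \<in> set (stack grown)" for g
    using that x_even frame_even[OF rest_in_stack] unfolding frames_grown grown_simps by auto
  show "(z, w) \<in> E - M" if "Scan z R' \<in> set (stack grown)" "w \<in> R'" for z R' w
    using that pending_edge[OF x_scanning] pending_edge[OF rest_in_stack]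
    unfolding frames_grown by auto
  show "inS grown w" if "z \<in> compl grown" "(z, w) \<in> E - M" for z w
    using that compl_neighbour_inS unfolding inS_grown grown_simps by blast
  show "inS grown w" if "Scan z R' \<in> set (stack grown)" "(z, w) \<in> E - M" "w \<notin> R'" for z R' w
    using that scanned_neighbour_inS[OF x_scanning] scanned_neighbour_inS[OF rest_in_stack]
    unfolding frames_grown inS_grown by auto
  show "base grown z = base grown w \<or>
      w \<notin> compl grown \<and> (\<forall>R'. Scan w R' \<in> set (stack grown) \<longrightarrow> z \<in> R')"
    if "z \<in> compl grown" "(z, w) \<in> E - M" "w \<in> ev grown" for z w
  proof -
    have z: "z \<in> compl s" "z \<in> ev s" "z \<noteq> y"
      using that(1) compl_even new_vertices grown_simps by auto
    have "w \<in> ev s" using that(2,3) compl_not_adjacent_new[OF z(1)] unfolding grown_simps by auto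
    then show ?thesis
      using compl_even_neighbour[OF z(1) that(2)] x_scanning rest_in_stack base_grown z
      unfolding frames_grown grown_simps by auto
  qed
qed (fact grown_compl_neighbour_below_active grown_compl_odd_neighbour_below_frame
    grown_scanned_even_neighbour_above grown_scanned_odd_neighbour_above)+

end


section \<open>The blossom step\<close>

locale blossom_step = scanning_step +
  fixes P us
  assumes y_even: "y \<in> ev s"
    and y_descendant: "(base s y, base s x) \<in> (bchild M s)\<^sup>+"
    and P_def: "P = {B. (base s y, B) \<in> (bchild M s)\<^sup>* \<and> (B, base s x) \<in> (bchild M s)\<^sup>+}"
    and us_P: "set us = mate M ` P"
begin

definition blossomed where
  "blossomed = s\<lparr>ev := ev s \<union> set us, od := od s - set us,
     base := (\<lambda>z. if (z \<in> ev s \<and> (base s z \<in> P \<or> base s z = base s x)) \<or> z \<in> set us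
                   then base s x else base s z),
     stack := map Call us @ Scan x (R - {y}) # rest\<rparr>"

definition contract :: "'a \<Rightarrow> 'a" where
  "contract B = (if B \<in> P then base s x else B)"

lemma blossomed_simps:
  "ev blossomed = ev s \<union> set us" "od blossomed = od s - set us" "opar blossomed = opar s"
  "stack blossomed = map Call us @ Scan x (R - {y}) # rest"
  "compl blossomed = compl s" "seen blossomed = seen s" "cp blossomed = cp s"
  unfolding blossomed_def by simp_all

lemma P_below_top: "B \<in> P \<Longrightarrow> (B, base s x) \<in> (bchild M s)\<^sup>+"
  unfolding P_def by simp

lemma P_bases:
  assumes "B \<in> P"
  shows "B \<in> ev s" "base s B = B" "matched M B" "mate M B \<in> od s"
proof -
  obtain c where "(B, c) \<in> bchild M s" using P_below_top[OF assms] by (meson tranclD)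
  then show "B \<in> ev s" "base s B = B" "matched M B" "mate M B \<in> od s"
    unfolding bchild_iff by simp_all
qed

lemma top_notin_P: "base s x \<notin> P"
  using P_below_top bchild_acyclic by blast

lemma us_odd: "u \<in> set us \<Longrightarrow> u \<in> od s \<and> u \<notin> ev s"
  using us_P P_bases even_odd_disjoint by auto

lemma us_mate:
  assumes "u \<in> set us"
  shows "matched M u" "mate M u \<in> P"
proof -
  obtain B where "B \<in> P" "u = mate M B" using assms us_P by auto
  then show "matched M u" "mate M u \<in> P" using mate_mate[OF matching] P_bases(3) by auto
qed

lemma mate_notin_P: "matched M u \<Longrightarrow> u \<notin> set us \<Longrightarrow> mate M u \<notin> P"
  using us_P mate_mate[OF matching] by force

lemma P_parent: "A \<in> P \<Longrightarrow> (A, p) \<in> bchild M s \<Longrightarrow> p \<in> P \<or> p = base s x"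
proof -
  assume A: "A \<in> P" and Ap: "(A, p) \<in> bchild M s"
  obtain c where "(A, c) \<in> bchild M s" "c = base s x \<or> (c, base s x) \<in> (bchild M s)\<^sup>+"
    using P_below_top[OF A] by (metis converse_tranclE)
  moreover have "(base s y, p) \<in> (bchild M s)\<^sup>*"
    using A Ap rtrancl_into_rtrancl unfolding P_def by fastforce
  ultimately show ?thesis using bchild_functional[OF Ap] unfolding P_def by auto
qed

lemma base_blossomed_even: "z \<in> ev s \<Longrightarrow> base blossomed z = contract (base s z)"
  using us_odd top_notin_P unfolding blossomed_def contract_def by auto

lemma base_blossomed_us: "u \<in> set us \<Longrightarrow> base blossomed u = base s x"
  unfolding blossomed_def by simp

lemma contract_top: "contract (base s x) = base s x"
  unfolding contract_def by simp

lemma contract_notin_P: "B \<notin> P \<Longrightarrow> contract B = B"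
  unfolding contract_def by simp

lemma inS_blossomed: "inS blossomed = inS s"
  using us_odd unfolding inS_def[abs_def] blossomed_simps by auto

lemma bchild_blossomed_subset: "bchild M blossomed \<subseteq> (bchild M s)\<^sup>+"
proof
  fix e assume "e \<in> bchild M blossomed"
  then obtain B q where e: "e = (B, q)" "(B, q) \<in> bchild M blossomed" by (cases e) auto
  then have B: "B \<in> ev s \<union> set us" "base blossomed B = B" "matched M B" "mate M B \<in> od s - set us"
    "q = base blossomed (opar s (mate M B))"
    unfolding bchild_iff blossomed_simps by simp_all
  have "B \<notin> set us" using B(4) us_mate P_bases(1) even_odd_disjoint by blast
  then have B_even: "B \<in> ev s" using B(1) by simp
  have B_base: "base s B = B \<and> B \<notin> P"
    using B(2) base_blossomed_even[OF B_even] top_notin_P base_idem[OF x_even] base_idem[OF B_even]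
    unfolding contract_def by (auto split: if_splits)
  define p where "p = base s (opar s (mate M B))"
  have Bp: "(B, p) \<in> bchild M s" using B_even B_base B(3,4) unfolding bchild_iff p_def by simp
  have "q = contract p"
    using B(4,5) base_blossomed_even[OF odd_parent_even] unfolding p_def by simp
  then have "(B, q) \<in> (bchild M s)\<^sup>+"
    using Bp P_below_top unfolding contract_def by (auto intro: trancl_into_trancl2)
  then show "e \<in> (bchild M s)\<^sup>+" using e by simp
qed

lemma bchild_blossomed_trancl: "(bchild M blossomed)\<^sup>+ \<subseteq> (bchild M s)\<^sup>+"
  using trancl_mono[OF _ bchild_blossomed_subset] by auto

lemma contract_bchild: "(A, p) \<in> bchild M s \<Longrightarrow> (contract A, contract p) \<in> (bchild M blossomed)\<^sup>*"
proof (cases "A \<in> P")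
  case True
  assume "(A, p) \<in> bchild M s"
  then have "contract p = base s x" using P_parent[OF True] contract_top contract_def by auto
  then show ?thesis using True unfolding contract_def by simp
next
  case False
  assume Ap: "(A, p) \<in> bchild M s"
  then have A: "A \<in> ev s" "base s A = A" "matched M A" "mate M A \<in> od s"
    "p = base s (opar s (mate M A))"
    unfolding bchild_iff by simp_all
  have "mate M A \<notin> set us" using us_mate(2) mate_mate[OF matching A(3)] False by metis
  moreover have "base blossomed A = A"
    using base_blossomed_even[OF A(1)] A(2) contract_notin_P[OF False] by simp
  moreover have "base blossomed (opar s (mate M A)) = contract p"
    using base_blossomed_even[OF odd_parent_even[OF A(4)]] A(5) by simp
  ultimately have "(A, contract p) \<in> bchild M blossomed"
    using A unfolding bchild_iff blossomed_simps by simp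
  then show ?thesis using contract_notin_P[OF False] by simp
qed

lemma contract_bchild_rtrancl:
  "(a, c) \<in> (bchild M s)\<^sup>* \<Longrightarrow> (contract a, contract c) \<in> (bchild M blossomed)\<^sup>*"
  by (induction rule: rtrancl_induct) (auto dest: contract_bchild)

lemma top_below_rest: "v \<in> frame_vertex ` set rest \<Longrightarrow> (base s x, base s v) \<in> (bchild M s)\<^sup>*"
  using stack_descending top by auto

lemma rest_notin_P: "v \<in> frame_vertex ` set rest \<Longrightarrow> base s v \<notin> P"
  using top_below_rest P_below_top bchild_acyclic by (meson rtrancl_trancl_trancl)

lemma rest_even: "v \<in> frame_vertex ` set rest \<Longrightarrow> v \<in> ev s"
  using frame_vertex_even top by simp

lemma base_blossomed_x: "base blossomed x = base s x"
  using base_blossomed_even[OF x_even] base_idem[OF x_even] contract_top by simp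

lemma y_base_in_P: "base s y \<in> P"
  using y_descendant unfolding P_def by simp

lemma base_blossomed_y: "base blossomed y = base s x"
  using base_blossomed_even[OF y_even] y_base_in_P unfolding contract_def by simp

lemma blossomed_frame_base:
  assumes "v \<in> set us \<union> insert x (frame_vertex ` set L)" "set L \<subseteq> set rest"
  obtains v0
    where "v0 \<in> insert x (frame_vertex ` set L)" "base blossomed v = base s v0" "base s v0 \<notin> P"
proof (cases "v \<in> set us \<or> v = x")
  case True
  then have "base blossomed v = base s x" using base_blossomed_us base_blossomed_x by auto
  then show ?thesis using that top_notin_P by blast
next
  case False
  then have v_L: "v \<in> frame_vertex ` set L" using assms(1) by auto
  then have "v \<in> frame_vertex ` set rest" using assms(2) by auto
  then show ?thesis
    using that[of v] v_L base_blossomed_even[OF rest_even] rest_notin_P contract_notin_P by auto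
qed

lemma base_blossomed_props:
  assumes "z \<in> ev blossomed"
  shows "base blossomed z \<in> ev s" "base s (base blossomed z) = base blossomed z"
    "base blossomed z \<notin> P"
proof -
  have "base blossomed z = base s x \<or> (z \<in> ev s \<and> base blossomed z = base s z \<and> base s z \<notin> P)"
    using assms base_blossomed_us base_blossomed_even unfolding blossomed_simps contract_def by auto
  then show "base blossomed z \<in> ev s" "base s (base blossomed z) = base blossomed z"
    "base blossomed z \<notin> P"
    using x_even base_even base_idem top_notin_P by auto
qed

lemma blossomed_forest: "search_forest V E M blossomed"
proof (intro search_forest.intro search_forest_axioms.intro)
  show "matching_graph V E M" by (rule matching_graph_axioms)
  show "ev blossomed \<inter> od blossomed = {}" using even_odd_disjoint unfolding blossomed_simps by auto
  show "base blossomed z \<in> ev blossomed" if "z \<in> ev blossomed" for z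
    using base_blossomed_props(1)[OF that] unfolding blossomed_simps by simp
  show "base blossomed (base blossomed z) = base blossomed z" if "z \<in> ev blossomed" for z
    using base_blossomed_props[OF that] base_blossomed_even contract_notin_P by simp
  show "opar blossomed u \<in> ev blossomed" if "u \<in> od blossomed" for u
    using that odd_parent_even unfolding blossomed_simps by simp
  show "mate M u \<in> ev blossomed" "base blossomed (mate M u) = mate M u"
    if "u \<in> od blossomed" "matched M u" for u
    using that odd_mate_even odd_mate_base base_blossomed_even mate_notin_P contract_notin_P
    unfolding blossomed_simps by auto
  show "inS blossomed (mate M z)" if "inS blossomed z" "matched M z" for z
    using that mate_inS unfolding inS_blossomed by blast
  show "base blossomed z = base blossomed (mate M z)"
    if z_even: "z \<in> ev blossomed" and z_matched: "matched M z"
      and mate_even: "mate M z \<in> ev blossomed" for z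
  proof -
    consider "z \<in> set us" | "mate M z \<in> set us" | "z \<in> ev s" "mate M z \<in> ev s"
      using z_even mate_even unfolding blossomed_simps by auto
    then show ?thesis
    proof cases
      case 1
      then show ?thesis using us_mate[OF 1] P_bases base_blossomed_us base_blossomed_even
        unfolding contract_def by simp
    next
      case 2
      then have "z \<in> P" using us_mate(2)[OF 2] mate_mate[OF matching z_matched] by simp
      then show ?thesis using 2 P_bases base_blossomed_us base_blossomed_even
        unfolding contract_def by simp
    qed (use z_matched even_mate_same_base base_blossomed_even in simp)
  qed
  show "z \<in> seen blossomed \<or> on_cp blossomed z" if "inS blossomed z" "\<not> matched M z" for z
    using that free_inS_handled unfolding inS_blossomed on_cp_def blossomed_simps by blast
  show "(B, B) \<notin> (bchild M blossomed)\<^sup>+" for B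
    using bchild_acyclic bchild_blossomed_trancl by blast
qed

lemma blossomed_stack_descending:
  "sorted_wrt (\<lambda>a b. (base blossomed a, base blossomed b) \<in> (bchild M blossomed)\<^sup>*)
    (map frame_vertex (stack blossomed))"
proof -
  let ?below = "\<lambda>a b. (base blossomed a, base blossomed b) \<in> (bchild M blossomed)\<^sup>*"
  have old_even: "v \<in> ev s" if "v \<in> set (x # map frame_vertex rest)" for v
    using that x_even rest_even by auto
  have "sorted_wrt (\<lambda>a b. (base s a, base s b) \<in> (bchild M s)\<^sup>*) (x # map frame_vertex rest)"
    using stack_descending top by simp
  then have "sorted_wrt ?below (x # map frame_vertex rest)"
    by (rule sorted_wrt_mono_rel[rotated])
      (use old_even base_blossomed_even contract_bchild_rtrancl in auto)
  moreover have "sorted_wrt ?below us"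
    using base_blossomed_us by (simp add: sorted_wrt_iff_nth_less)
  moreover have "?below a b" if "a \<in> set us" "b \<in> set (x # map frame_vertex rest)" for a b
  proof -
    have "(base s x, base s b) \<in> (bchild M s)\<^sup>*" using that(2) top_below_rest by auto
    then show ?thesis
      using contract_bchild_rtrancl base_blossomed_us[OF that(1)] base_blossomed_even
        old_even[OF that(2)] contract_top by metis
  qed
  moreover have "map frame_vertex (stack blossomed) = us @ x # map frame_vertex rest"
    unfolding blossomed_simps by (induction us) simp_all
  ultimately show ?thesis by (simp add: sorted_wrt_append)
qed

lemma blossomed_compl_neighbour_below_active:
  assumes "z \<in> compl blossomed" "(z, w) \<in> E - M"
    "Call w \<in> set (stack blossomed) \<or> (\<exists>R'. Scan w R' \<in> set (stack blossomed) \<and> z \<in> R')"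
  shows "(base blossomed z, base blossomed w) \<in> (bchild M blossomed)\<^sup>*"
proof -
  have z: "z \<in> compl s" "z \<in> ev s" using assms(1) compl_even unfolding blossomed_simps by auto
  show ?thesis
  proof (cases "w \<in> set us")
    case True
    have "(base s z, base s x) \<in> (bchild M s)\<^sup>*"
      using compl_odd_neighbour_below_frame[of w z x] us_odd[OF True] us_mate[OF True] P_below_top
        z(1) assms(2) x_scanning by force
    then show ?thesis
      using contract_bchild_rtrancl base_blossomed_even[OF z(2)] base_blossomed_us[OF True]
        contract_top by metis
  next
    case False
    then have "Call w \<in> set (stack s) \<or> (\<exists>R'. Scan w R' \<in> set (stack s) \<and> z \<in> R')"
      using assms(3) top unfolding blossomed_simps by auto
    moreover from this have "w \<in> ev s" using frame_even by force
    ultimately show ?thesis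
      using compl_neighbour_below_active[OF z(1) assms(2)] contract_bchild_rtrancl
        base_blossomed_even z(2) by simp
  qed
qed

lemma frames_blossomed:
  "set (stack blossomed) = Call ` set us \<union> insert (Scan x (R - {y})) (set rest)"
  unfolding blossomed_simps by auto

lemma blossomed_scanned_even_neighbour_above:
  assumes "stack blossomed = pre @ Scan w R' # post" "z \<in> ev blossomed" "(w, z) \<in> E - M" "z \<notin> R'"
    "z \<in> frame_vertex ` set pre"
  shows "base blossomed z = base blossomed w"
  using split_stack_at_Scan[OF assms(1)[unfolded blossomed_simps]]
proof (elim disjE exE conjE)
  assume "pre = map Call us" "w = x"
  then show ?thesis using assms(5) base_blossomed_us base_blossomed_x by auto
next
  fix pre'
  assume pre': "pre = map Call us @ Scan x (R - {y}) # pre'" "rest = pre' @ Scan w R' # post"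
  then have old_stack: "stack s = (Scan x R # pre') @ Scan w R' # post" using top by simp
  have w_even: "w \<in> ev s" using frame_even[of "Scan w R'"] old_stack by simp
  show ?thesis
  proof (cases "z \<in> set us")
    case True
    have "base s x = base s w"
      using scanned_odd_neighbour_above[OF old_stack, of z x] us_odd[OF True] us_mate[OF True]
        P_below_top assms(3,4) by simp
    then show ?thesis
      using base_blossomed_us[OF True] base_blossomed_even[OF w_even] contract_top by simp
  next
    case False
    then have "z \<in> ev s" "z \<in> frame_vertex ` set (Scan x R # pre')"
      using assms(2,5) pre'(1) unfolding blossomed_simps by auto
    then show ?thesis
      using scanned_even_neighbour_above[OF old_stack] assms(3,4) base_blossomed_even w_even by simp
  qed
qed

lemma blossomed_scanned_odd_neighbour_above:
  assumes "stack blossomed = pre @ Scan w R' # post" "u \<in> od blossomed" "matched M u"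
    "(w, u) \<in> E - M" "u \<notin> R'" "v \<in> frame_vertex ` set pre"
    "(mate M u, base blossomed v) \<in> (bchild M blossomed)\<^sup>+"
  shows "base blossomed v = base blossomed w"
  using split_stack_at_Scan[OF assms(1)[unfolded blossomed_simps]]
proof (elim disjE exE conjE)
  assume "pre = map Call us" "w = x"
  then show ?thesis using assms(6) base_blossomed_us base_blossomed_x by auto
next
  fix pre'
  assume pre': "pre = map Call us @ Scan x (R - {y}) # pre'" "rest = pre' @ Scan w R' # post"
  then have old_stack: "stack s = (Scan x R # pre') @ Scan w R' # post" using top by simp
  have w_even: "w \<in> ev s" using frame_even[of "Scan w R'"] old_stack by simp
  have "v \<in> set us \<union> insert x (frame_vertex ` set pre')" using assms(6) pre'(1) by auto
  moreover have "set pre' \<subseteq> set rest" using pre'(2) by auto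
  ultimately obtain v0 where v0: "v0 \<in> insert x (frame_vertex ` set pre')"
    "base blossomed v = base s v0" "base s v0 \<notin> P"
    by (rule blossomed_frame_base)
  have "(mate M u, base s v0) \<in> (bchild M s)\<^sup>+"
    using assms(7) v0(2) bchild_blossomed_trancl by auto
  then have "base s v0 = base s w"
    using scanned_odd_neighbour_above[OF old_stack, of u v0] assms(2-5) v0(1)
    unfolding blossomed_simps by simp
  then show ?thesis
    using v0(2,3) base_blossomed_even[OF w_even] contract_notin_P by simp
qed

lemma blossomed_compl_odd_neighbour_below_frame:
  assumes "u \<in> od blossomed" "matched M u" "z \<in> compl blossomed" "(z, u) \<in> E - M"
    "v \<in> frame_vertex ` set (stack blossomed)"
    "(mate M u, base blossomed v) \<in> (bchild M blossomed)\<^sup>+"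
  shows "(base blossomed z, base blossomed v) \<in> (bchild M blossomed)\<^sup>*"
proof -
  have z: "z \<in> compl s" "z \<in> ev s" using assms(3) compl_even blossomed_simps by auto
  have "v \<in> set us \<union> insert x (frame_vertex ` set rest)"
    using assms(5) unfolding frames_blossomed by auto
  then obtain v0 where v0: "v0 \<in> insert x (frame_vertex ` set rest)"
    "base blossomed v = base s v0" "base s v0 \<notin> P"
    by (rule blossomed_frame_base) simp
  then have "v0 \<in> frame_vertex ` set (stack s)" using top by auto
  moreover have "(mate M u, base s v0) \<in> (bchild M s)\<^sup>+"
    using assms(6) v0(2) bchild_blossomed_trancl by auto
  ultimately have "(base s z, base s v0) \<in> (bchild M s)\<^sup>*"
    using compl_odd_neighbour_below_frame assms(1,2,4) z(1) unfolding blossomed_simps by blast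
  then show ?thesis
    using contract_bchild_rtrancl base_blossomed_even[OF z(2)] v0(2,3) contract_notin_P by metis
qed

lemma blossomed_compl_even_neighbour:
  assumes z_done: "z \<in> compl blossomed" and zw: "(z, w) \<in> E - M" and w_even: "w \<in> ev blossomed"
  shows "base blossomed z = base blossomed w \<or>
    w \<notin> compl blossomed \<and> (\<forall>R'. Scan w R' \<in> set (stack blossomed) \<longrightarrow> z \<in> R')"
proof -
  have z: "z \<in> compl s" "z \<in> ev s" using z_done compl_even blossomed_simps by auto
  consider "w \<in> set us" | "z = y" "w = x" | "w \<in> ev s" "\<not> (z = y \<and> w = x)"
    using w_even unfolding blossomed_simps by auto
  then show ?thesis
  proof cases
    case 1
    then have "w \<notin> ev s" using us_odd by blast
    then show ?thesis using compl_even x_even frame_even[OF rest_in_stack]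
      unfolding frames_blossomed blossomed_simps by force
  next
    case 2
    then show ?thesis using base_blossomed_x base_blossomed_y by simp
  next
    case 3
    then show ?thesis
      using compl_even_neighbour[OF z(1) zw] x_scanning rest_in_stack base_blossomed_even z(2)
      unfolding frames_blossomed blossomed_simps by auto
  qed
qed

lemma blossomed_invariants: "search_invariants V E M blossomed"
proof (intro search_invariants.intro search_invariants_axioms.intro blossomed_forest
    blossomed_stack_descending)
  show "z \<in> ev blossomed" if "z \<in> compl blossomed" for z
    using that compl_even unfolding blossomed_simps by simp
  show "frame_vertex g \<in> ev blossomed" if "g \<in> set (stack blossomed)" for g
    using that x_even frame_even[OF rest_in_stack]
    unfolding frames_blossomed blossomed_simps by auto
  show "(z, w) \<in> E - M" if "Scan z R' \<in> set (stack blossomed)" "w \<in> R'" for z R' w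
    using that pending_edge[OF x_scanning] pending_edge[OF rest_in_stack]
    unfolding frames_blossomed by auto
  show "inS blossomed w" if "z \<in> compl blossomed" "(z, w) \<in> E - M" for z w
    using that compl_neighbour_inS unfolding inS_blossomed blossomed_simps by blast
  show "inS blossomed w" if "Scan z R' \<in> set (stack blossomed)" "(z, w) \<in> E - M" "w \<notin> R'"
    for z R' w
    using that scanned_neighbour_inS[OF x_scanning] scanned_neighbour_inS[OF rest_in_stack] y_even
    unfolding frames_blossomed inS_blossomed by (auto simp: inS_def)
qed (fact blossomed_compl_even_neighbour blossomed_compl_neighbour_below_active
    blossomed_compl_odd_neighbour_below_frame
    blossomed_scanned_even_neighbour_above blossomed_scanned_odd_neighbour_above)+

end


section \<open>Reachable states\<close>

context search_invariants
begin

lemma grow_step_invariants: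
  assumes "stack s = Scan x R # rest" "y \<in> R" "\<not> inS s y" "\<not> free V M y"
  shows "search_invariants V E M (s\<lparr>od := insert y (od s), opar := (opar s)(y := x),
    ev := insert (mate M y) (ev s), base := (base s)(mate M y := mate M y),
    stack := Call (mate M y) # Scan x (R - {y}) # rest\<rparr>)"
proof -
  interpret grow_step V E M s x R rest y by unfold_locales (fact assms)+
  show ?thesis using grown_invariants unfolding grown_def .
qed

lemma blossom_step_invariants:
  assumes "stack s = Scan x R # rest" "y \<in> R" "y \<in> ev s"
    "(base s y, base s x) \<in> (bchild M s)\<^sup>+"
    "P = {B. (base s y, B) \<in> (bchild M s)\<^sup>* \<and> (B, base s x) \<in> (bchild M s)\<^sup>+}"
    "set us = mate M ` P"
  shows "search_invariants V E M (s\<lparr>ev := ev s \<union> set us, od := od s - set us,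
    base := (\<lambda>z. if (z \<in> ev s \<and> (base s z \<in> P \<or> base s z = base s x)) \<or> z \<in> set us
                  then base s x else base s z),
    stack := map Call us @ Scan x (R - {y}) # rest\<rparr>)"
proof -
  interpret blossom_step V E M s x R rest y P us by unfold_locales (fact assms)+
  show ?thesis using blossomed_invariants unfolding blossomed_def .
qed

lemma step_invariants:
  assumes "step V E M s t"
  shows "search_invariants V E M t"
  using assms
proof cases
  case outer_skip
  then show ?thesis by (simp add: skip_step_invariants)
next
  case outer_start
  then show ?thesis by (simp add: start_step_invariants)
next
  case (call x rest)
  then show ?thesis using call_step_invariants[of x rest] by simp
next
  case finish
  then show ?thesis by (simp add: finish_step_invariants)
next
  case augment
  then show ?thesis by (simp add: augment_step_invariants)
next
  case grow
  then show ?thesis by (simp add: grow_step_invariants)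
next
  case (blossom x R rest y P us)
  then show ?thesis using blossom_step_invariants[of x R rest y P us] by blast
next
  case nothing
  then show ?thesis by (simp add: nothing_step_invariants)
qed

end

lemma (in matching_graph) reachable_invariants:
  "(step V E M)\<^sup>*\<^sup>* init_state s \<Longrightarrow> search_invariants V E M s"
  by (induction rule: rtranclp_induct)
    (auto intro: search_invariants_init search_invariants.step_invariants)

theorem lemmaA4:
  fixes V :: "'v set" and E M :: "('v \<times> 'v) set" and s :: "'v state"
  assumes "graph V E" and "matching E M"
    and "(step V E M)\<^sup>*\<^sup>* init_state s"
    and "(x, y) \<in> E"
    and "x \<in> ev s" and "y \<in> ev s"
    and "x \<in> compl s" and "y \<in> compl s"
  shows "base s x = base s y"
proof -
  interpret matching_graph V E M using assms(1,2) by unfold_locales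
  interpret search_invariants V E M s using reachable_invariants[OF assms(3)] .
  show ?thesis
  proof (cases "(x, y) \<in> M")
    case True
    then have "matched M x" "mate M x = y"
      using mate_eq[OF matching True] unfolding matched_def by auto
    then show ?thesis using even_mate_same_base assms(5,6) by simp
  next
    case False
    then show ?thesis using compl_even_neighbour[of x y] assms(4,6-8) by blast
  qed
qed

end
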